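(* Let $r:\mathbb{R}_+\to\mathbb{R}_+$ be concave and strictly increasing with $r(z)<1/2$ for all $z\in\mathbb{R}_+$. For each integer $i\ge1$ let $C^i\subseteq\mathbb{R}^n$ be a closed convex set with $\mathbf 0\in C^i$ and \[ \Big\{\mathbf x\in\mathbb{R}^n:\ \|\mathbf x\|_2\le\tfrac{r(i-1)+r(i+1)}{2}\Big\}\subseteq C^i\subseteq\{\mathbf x\in\mathbb{R}^n:\ \|\mathbf x\|_2\le r(i)\}. \] Then $S=\bigcup_{i=1}^\infty\big(C^i+i\,\mathbf e(1)\big)$ is a rational MICP representable set, and the sets $C^i+i\,\mathbf e(1)$, $i\ge1$, are pairwise disjoint.
   Context: $\mathbf e(1)$ denotes the first standard unit vector of $\mathbb{R}^n$. A set $S\subseteq\mathbb{R}^n$ is MICP representable if there is a closed convex $M\subseteq\mathbb{R}^{n+p+d}$ (variables $(\mathbf x,\mathbf y,\mathbf z)$, $\mathbf x\in\mathbb{R}^n,\mathbf y\in\mathbb{R}^p,\mathbf z\in\mathbb{R}^d$) such that $\mathbf x\in S$ iff there exist $\mathbf y\in\mathbb{R}^p$, $\mathbf z\in\mathbb{Z}^d$ with $(\mathbf x,\mathbf y,\mathbf z)\in M$. It is rational MICP representable if such an $M$ exists with $\operatorname{proj}_{\mathbf z}(M)$ rationally unbounded, where $I\subseteq\mathbb{R}^d$ is rationally unbounded if for every image $I'\subseteq\mathbb{R}^{d'}$ of $I$ under a rational affine map, either $I'$ is bounded or its recession cone $I'_\infty=\{\mathbf r:\ \mathbf x+\lambda\mathbf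 r\in I'\ \forall\mathbf x\in I',\lambda\ge0\}$ contains a nonzero integer vector. *)

theory Defs
  imports "HOL-Analysis.Analysis"
begin

text \<open>Points of R^k are represented as functions nat => real vanishing from index k on
  (coordinate j of the paper is index j-1). The topology is the library product topology
  on nat => real, which restricted to the closed subspace R^k is the Euclidean one.\<close>

definition Rn :: "nat \<Rightarrow> (nat \<Rightarrow> real) set" where
  "Rn k = {v. \<forall>i\<ge>k. v i = 0}"

definition vcomb :: "real \<Rightarrow> (nat \<Rightarrow> real) \<Rightarrow> (nat \<Rightarrow> real) \<Rightarrow> (nat \<Rightarrow> real)" where
  "vcomb u x y = (\<lambda>i. (1 - u) * x i + u * y i)"

definition vconvex :: "(nat \<Rightarrow> real) set \<Rightarrow> bool" where
  "vconvex A \<longleftrightarrow> (\<forall>x\<in>A. \<forall>y\<in>A. \<forall>u::real. 0 \<le> u \<and> u \<le> 1 \<longrightarrow> vcomb u x y \<in> A)"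

definition vconvex3 :: "((nat \<Rightarrow> real) \<times> (nat \<Rightarrow> real) \<times> (nat \<Rightarrow> real)) set \<Rightarrow> bool" where
  "vconvex3 M \<longleftrightarrow> (\<forall>x y z x' y' z' u. (x,y,z) \<in> M \<and> (x',y',z') \<in> M \<and> 0 \<le> u \<and> u \<le> (1::real)
      \<longrightarrow> (vcomb u x x', vcomb u y y', vcomb u z z') \<in> M)"

definition Zvec :: "(nat \<Rightarrow> real) \<Rightarrow> bool" where
  "Zvec v \<longleftrightarrow> (\<forall>i. v i \<in> \<int>)"

definition norm2 :: "nat \<Rightarrow> (nat \<Rightarrow> real) \<Rightarrow> real" where
  "norm2 k x = sqrt (\<Sum>i<k. (x i)\<^sup>2)"

definition e1 :: "nat \<Rightarrow> real" where
  "e1 = (\<lambda>i. if i = 0 then 1 else 0)"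

definition vshift :: "(nat \<Rightarrow> real) set \<Rightarrow> (nat \<Rightarrow> real) \<Rightarrow> (nat \<Rightarrow> real) set" where
  "vshift C t = (\<lambda>x. (\<lambda>i. x i + t i)) ` C"

definition vscale :: "real \<Rightarrow> (nat \<Rightarrow> real) \<Rightarrow> (nat \<Rightarrow> real)" where
  "vscale c v = (\<lambda>i. c * v i)"

definition raff_image ::
  "nat \<Rightarrow> nat \<Rightarrow> (nat \<Rightarrow> nat \<Rightarrow> real) \<Rightarrow> (nat \<Rightarrow> real) \<Rightarrow> (nat \<Rightarrow> real) set \<Rightarrow> (nat \<Rightarrow> real) set" where
  "raff_image d d' A b I = (\<lambda>x. (\<lambda>j. if j < d' then (\<Sum>i<d. A j i * x i) + b j else 0)) ` I"

definition rational_affine :: "nat \<Rightarrow> nat \<Rightarrow> (nat \<Rightarrow> nat \<Rightarrow> real) \<Rightarrow> (nat \<Rightarrow> real) \<Rightarrow> bool" where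
  "rational_affine d d' A b \<longleftrightarrow> (\<forall>j<d'. b j \<in> \<rat> \<and> (\<forall>i<d. A j i \<in> \<rat>))"

definition vbounded :: "nat \<Rightarrow> (nat \<Rightarrow> real) set \<Rightarrow> bool" where
  "vbounded k I \<longleftrightarrow> (\<exists>B. \<forall>v\<in>I. norm2 k v \<le> B)"

definition rec_cone :: "nat \<Rightarrow> (nat \<Rightarrow> real) set \<Rightarrow> (nat \<Rightarrow> real) set" where
  "rec_cone k I = {r \<in> Rn k. \<forall>x\<in>I. \<forall>t::real. t \<ge> 0 \<longrightarrow> (\<lambda>i. x i + t * r i) \<in> I}"

definition rationally_unbounded :: "nat \<Rightarrow> (nat \<Rightarrow> real) set \<Rightarrow> bool" where
  "rationally_unbounded d I \<longleftrightarrow>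
     (\<forall>d' A b. rational_affine d d' A b \<longrightarrow>
        (let I' = raff_image d d' A b I in
           vbounded d' I' \<or> (\<exists>r\<in>rec_cone d' I'. r \<noteq> (\<lambda>_. 0) \<and> Zvec r)))"

definition proj_z :: "((nat \<Rightarrow> real) \<times> (nat \<Rightarrow> real) \<times> (nat \<Rightarrow> real)) set \<Rightarrow> (nat \<Rightarrow> real) set" where
  "proj_z M = {z. \<exists>x y. (x, y, z) \<in> M}"

definition MICP_rep_by ::
  "nat \<Rightarrow> (nat \<Rightarrow> real) set \<Rightarrow> nat \<Rightarrow> nat \<Rightarrow> ((nat \<Rightarrow> real) \<times> (nat \<Rightarrow> real) \<times> (nat \<Rightarrow> real)) set \<Rightarrow> bool" where
  "MICP_rep_by n S p d M \<longleftrightarrow>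
     M \<subseteq> Rn n \<times> Rn p \<times> Rn d \<and> closed M \<and> vconvex3 M \<and>
     (\<forall>x\<in>Rn n. x \<in> S \<longleftrightarrow> (\<exists>y\<in>Rn p. \<exists>z\<in>Rn d. Zvec z \<and> (x, y, z) \<in> M))"

definition MICP_representable :: "nat \<Rightarrow> (nat \<Rightarrow> real) set \<Rightarrow> bool" where
  "MICP_representable n S \<longleftrightarrow> S \<subseteq> Rn n \<and> (\<exists>p d M. MICP_rep_by n S p d M)"

definition rational_MICP_representable :: "nat \<Rightarrow> (nat \<Rightarrow> real) set \<Rightarrow> bool" where
  "rational_MICP_representable n S \<longleftrightarrow> S \<subseteq> Rn n \<and>
     (\<exists>p d M. MICP_rep_by n S p d M \<and> rationally_unbounded d (proj_z M))"

end

theory Submission imports Defs begin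

text \<open>The lift uses a single integer variable z_1 and no continuous ones. Let L_k be the
  secant of r through k - 1 and k + 1 (secant r k) and s_k = L_k(k), the inner radius of C^k.
  In the layer z_1 = t \<ge> 1 we require, for every k, that x - t e(1) lie in (L_k(t) / s_k) C^k
  (layer_map). As L_k is affine and positive there, each constraint is a perspective image of
  C^k, hence closed and convex. Concavity gives r(i) \<le> L_k(i) for integers i \<noteq> k, so at an
  integer layer i the scaled copy of C^k contains the ball of radius L_k(i) \<ge> r(i) around 0,
  hence contains C^i;
  thus the integer layers cut out exactly the sets C^i + i e(1). The projection onto z is the
  half-line z_1 \<ge> 1, which is rationally unbounded, and the sets are disjoint because r < 1/2
  keeps the first coordinate of C^i + i e(1) within 1/2 of i.\<close>

lemma concave_on_le_secant:
  fixes f :: "real \<Rightarrow> real"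
  assumes f: "concave_on I f" and I: "a \<in> I" "b \<in> I" "t \<in> I"
    and ab: "a < b" and t: "t \<le> a \<or> b \<le> t"
  shows "f t \<le> f a + (f b - f a) / (b - a) * (t - a)"
proof -
  have g: "convex_on I (\<lambda>x. - f x)"
    using f by (simp add: convex_on_iff_concave)
  consider "t = a" | "t = b" | "b < t" | "t < a" using t by linarith
  then show ?thesis
  proof cases
    case 3
    have "(f t - f a) / (t - a) \<le> (f b - f a) / (b - a)"
      using convex_on_slope_le(1)[OF g I(1,3) ab 3] 3 ab by (simp add: field_simps)
    then show ?thesis
      using 3 ab by (simp add: field_simps)
  next
    case 4
    have "(f b - f a) / (b - a) \<le> (f a - f t) / (a - t)"
      using convex_on_slope_le[OF g I(3,2) 4 ab] 4 ab by (simp add: field_simps)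
    then show ?thesis
      using 4 ab by (simp add: field_simps)
  qed (use ab in auto)
qed

lemma Rats_common_denominator:
  fixes q :: "nat \<Rightarrow> real"
  assumes "\<forall>j<N. q j \<in> \<rat>"
  shows "\<exists>D::nat. D > 0 \<and> (\<forall>j<N. real D * q j \<in> \<int>)"
  using assms
proof (induction N)
  case 0
  show ?case by (intro exI[of _ 1]) auto
next
  case (Suc N)
  then obtain D where D: "D > 0" "\<forall>j<N. real D * q j \<in> \<int>"
    by auto
  obtain a b where ab: "0 < b" "q N = of_int a / of_int b"
    using Suc.prems Rats_cases' by (metis lessI)
  have scale: "real (D * nat b) * q j = real D * (of_int b * q j)" for j
    using ab by simp
  have "real (D * nat b) * q j \<in> \<int>" if "j < Suc N" for j
  proof (cases "j = N")
    case True
    have "of_int b * q N = of_int a"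
      using ab by simp
    then show ?thesis
      unfolding scale True by simp
  next
    case False
    then have "real D * q j \<in> \<int>"
      using D that by simp
    then show ?thesis
      unfolding scale by (metis Ints_mult Ints_of_int mult.left_commute)
  qed
  moreover have "D * nat b > 0" using D ab by simp
  ultimately show ?case by blast
qed

lemma rationally_unbounded_halfline: "rationally_unbounded 1 {z \<in> Rn 1. c \<le> z 0}"
  unfolding rationally_unbounded_def Let_def
proof (intro allI impI)
  fix d' A b assume ra: "rational_affine 1 d' A b"
  define F where "F z = (\<lambda>j. if j < d' then A j 0 * z 0 + b j else 0)" for z :: "nat \<Rightarrow> real"
  have img: "raff_image 1 d' A b {z \<in> Rn 1. c \<le> z 0} = F ` {z \<in> Rn 1. c \<le> z 0}"
  proof -
    have sum1: "(\<Sum>i<1. A j i * z i) = A j 0 * z 0" for j and z :: "nat \<Rightarrow> real"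
      by simp
    show ?thesis
      unfolding raff_image_def F_def sum1 ..
  qed
  show "vbounded d' (raff_image 1 d' A b {z \<in> Rn 1. c \<le> z 0}) \<or>
    (\<exists>v\<in>rec_cone d' (raff_image 1 d' A b {z \<in> Rn 1. c \<le> z 0}). v \<noteq> (\<lambda>_. 0) \<and> Zvec v)"
  proof (cases "\<forall>j<d'. A j 0 = 0")
    case True
    then have "F z = (\<lambda>j. if j < d' then b j else 0)" for z
      unfolding F_def by auto
    then show ?thesis unfolding img vbounded_def by auto
  next
    case False
    then obtain j0 where j0: "j0 < d'" "A j0 0 \<noteq> 0" by auto
    obtain D :: nat where D: "D > 0" "\<forall>j<d'. real D * A j 0 \<in> \<int>"
      using ra Rats_common_denominator[of d' "\<lambda>j. A j 0"]
      unfolding rational_affine_def by auto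
    define v where "v = (\<lambda>j. if j < d' then real D * A j 0 else 0)"
    have "v \<in> rec_cone d' (F ` {z \<in> Rn 1. c \<le> z 0})"
      unfolding rec_cone_def
    proof (intro CollectI conjI ballI allI impI)
      show "v \<in> Rn d'" unfolding v_def Rn_def by auto
      fix w and t :: real assume "w \<in> F ` {z \<in> Rn 1. c \<le> z 0}" and t: "0 \<le> t"
      then obtain z where z: "c \<le> z 0" "w = F z" by auto
      define z' where "z' = (\<lambda>i::nat. if i = 0 then z 0 + t * real D else 0)"
      have "0 \<le> t * real D" using t by simp
      then have z': "z' \<in> {z \<in> Rn 1. c \<le> z 0}"
        using z unfolding z'_def Rn_def by auto
      have "F z' = (\<lambda>i. w i + t * v i)"
        unfolding z F_def z'_def v_def by (auto simp: algebra_simps)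
      then show "(\<lambda>i. w i + t * v i) \<in> F ` {z \<in> Rn 1. c \<le> z 0}"
        using rev_image_eqI[OF z'] by metis
    qed
    moreover have "v \<noteq> (\<lambda>_. 0)"
    proof
      assume "v = (\<lambda>_. 0)"
      then have "v j0 = 0" by simp
      then show False using j0 D unfolding v_def by simp
    qed
    moreover have "Zvec v" unfolding Zvec_def v_def using D by auto
    ultimately show ?thesis unfolding img by blast
  qed
qed

lemma vcomb_perspective:
  fixes L1 L2 u c :: real and a b :: "nat \<Rightarrow> real"
  assumes L: "0 < L1" "0 < L2" and u: "0 \<le> u" "u \<le> 1"
  defines "Lt \<equiv> (1 - u) * L1 + u * L2"
  defines "\<mu> \<equiv> u * L2 / Lt"
  shows "0 \<le> \<mu>" "\<mu> \<le> 1"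
    and "(\<lambda>i. c / Lt * ((1 - u) * a i + u * b i))
           = vcomb \<mu> (\<lambda>i. c / L1 * a i) (\<lambda>i. c / L2 * b i)"
proof -
  have Lt_pos: "0 < Lt"
    unfolding Lt_def using L u by (cases "u = 0") (auto intro: add_nonneg_pos add_pos_nonneg)
  show "0 \<le> \<mu>" "\<mu> \<le> 1"
    unfolding \<mu>_def using L u Lt_pos by (auto simp: Lt_def field_simps)
  have "1 - \<mu> = (1 - u) * L1 / Lt"
    unfolding \<mu>_def using Lt_pos by (simp add: Lt_def field_simps)
  then have "vcomb \<mu> (\<lambda>i. c / L1 * a i) (\<lambda>i. c / L2 * b i) i
      = (1 - u) * L1 / Lt * (c / L1 * a i) + u * L2 / Lt * (c / L2 * b i)" for i
    unfolding vcomb_def \<mu>_def by simp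
  also have "\<dots> i = c / Lt * ((1 - u) * a i + u * b i)" for i
    using L Lt_pos by (simp add: field_simps)
  finally show "(\<lambda>i. c / Lt * ((1 - u) * a i + u * b i))
      = vcomb \<mu> (\<lambda>i. c / L1 * a i) (\<lambda>i. c / L2 * b i)"
    by auto
qed

lemma norm2_scale: "norm2 k (\<lambda>i. a * v i) = \<bar>a\<bar> * norm2 k v"
proof -
  have "(\<Sum>i<k. (a * v i)\<^sup>2) = a\<^sup>2 * (\<Sum>i<k. (v i)\<^sup>2)"
    by (simp add: power_mult_distrib sum_distrib_left)
  then show ?thesis
    unfolding norm2_def by (simp add: real_sqrt_mult)
qed

lemma abs_le_norm2:
  assumes "i < k"
  shows "\<bar>v i\<bar> \<le> norm2 k v"
proof -
  have "(v i)\<^sup>2 \<le> (\<Sum>j<k. (v j)\<^sup>2)"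
    using assms by (intro member_le_sum) auto
  then show ?thesis
    unfolding norm2_def using real_sqrt_le_mono by fastforce
qed

lemma closed_Rn: "closed (Rn k)"
proof -
  have "Rn k = (\<Inter>i\<in>{k..}. {v. v i = 0})"
    unfolding Rn_def by auto
  moreover have "closed {v :: nat \<Rightarrow> real. v i = 0}" for i
    by (intro closed_Collect_eq continuous_on_product_coordinates continuous_on_const)
  ultimately show ?thesis
    by (simp add: closed_INT)
qed

lemma Rn_vcomb: "x \<in> Rn k \<Longrightarrow> y \<in> Rn k \<Longrightarrow> vcomb u x y \<in> Rn k"
  by (simp add: Rn_def vcomb_def)

lemma mem_vshift_vscale:
  "x \<in> vshift A (vscale a v) \<longleftrightarrow> (\<exists>c\<in>A. x = (\<lambda>i. c i + a * v i))"
  unfolding vshift_def vscale_def by auto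

definition secant :: "(real \<Rightarrow> real) \<Rightarrow> nat \<Rightarrow> real \<Rightarrow> real" where
  "secant r k t = r (real k - 1) + (r (real k + 1) - r (real k - 1)) / 2 * (t - (real k - 1))"

lemma secant_center: "secant r k (real k) = (r (real k - 1) + r (real k + 1)) / 2"
  unfolding secant_def by (simp add: field_simps)

definition layer_map ::
  "(real \<Rightarrow> real) \<Rightarrow> nat \<Rightarrow> (nat \<Rightarrow> real) \<Rightarrow> real \<Rightarrow> nat \<Rightarrow> real" where
  "layer_map r k x t = (\<lambda>i. secant r k (real k) / secant r k t * (x i - t * e1 i))"

definition micp_lift ::
  "(real \<Rightarrow> real) \<Rightarrow> nat \<Rightarrow> (nat \<Rightarrow> (nat \<Rightarrow> real) set)
     \<Rightarrow> ((nat \<Rightarrow> real) \<times> (nat \<Rightarrow> real) \<times> (nat \<Rightarrow> real)) set" where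
  "micp_lift r n C = {(x, y, z). x \<in> Rn n \<and> y \<in> Rn 0 \<and> z \<in> Rn 1 \<and> 1 \<le> z 0 \<and>
     (\<forall>k\<ge>1. layer_map r k x (z 0) \<in> C k)}"

locale stacked_convex_sets =
  fixes r :: "real \<Rightarrow> real" and n :: nat and C :: "nat \<Rightarrow> (nat \<Rightarrow> real) set"
  assumes n_pos: "n \<ge> 1"
    and concave: "concave_on {0..} r" and strict_mono: "strict_mono_on {0..} r"
    and r_range: "\<forall>z\<ge>0. 0 \<le> r z \<and> r z < 1/2"
    and C_basic: "\<forall>i\<ge>1. C i \<subseteq> Rn n \<and> closed (C i) \<and> vconvex (C i) \<and> (\<lambda>_. 0) \<in> C i"
    and C_inner: "\<forall>i\<ge>1. {x \<in> Rn n. norm2 n x \<le> (r (real i - 1) + r (real i + 1)) / 2} \<subseteq> C i"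
    and C_outer: "\<forall>i\<ge>1. C i \<subseteq> {x \<in> Rn n. norm2 n x \<le> r (real i)}"
begin

lemma r_less: "0 \<le> a \<Longrightarrow> a < b \<Longrightarrow> r a < r b"
  using strict_mono_onD[OF strict_mono] by auto

lemma r_nonneg: "0 \<le> t \<Longrightarrow> 0 \<le> r t"
  using r_range by simp

lemma r_le_secant:
  assumes "1 \<le> k" "i \<noteq> k"
  shows "r (real i) \<le> secant r k (real i)"
proof -
  have "real i \<le> real k - 1 \<or> real k + 1 \<le> real i"
    using assms by linarith
  then have "r (real i) \<le> r (real k - 1)
      + (r (real k + 1) - r (real k - 1)) / (real k + 1 - (real k - 1)) * (real i - (real k - 1))"
    using assms(1) by (intro concave_on_le_secant[OF concave]) auto
  then show ?thesis
    unfolding secant_def by simp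
qed

lemma secant_pos:
  assumes k: "1 \<le> k" and t: "1 \<le> t"
  shows "0 < secant r k t"
proof -
  have slope: "0 < r (real k + 1) - r (real k - 1)"
    using r_less k by simp
  have "0 < secant r k 1"
  proof (cases "k = 1")
    case True
    then show ?thesis
      using slope r_nonneg[of 0] unfolding secant_def by (simp add: field_simps)
  next
    case False
    then have "r 1 \<le> secant r k 1"
      using r_le_secant[OF k, of 1] by simp
    moreover have "0 < r 1"
      using r_less[of 0 1] r_nonneg[of 0] by simp
    ultimately show ?thesis by simp
  qed
  moreover have "secant r k 1 \<le> secant r k t"
    using slope t unfolding secant_def by (simp add: mult_left_mono)
  ultimately show ?thesis by simp
qed

lemma secant_pos_at_nat: "1 \<le> k \<Longrightarrow> 1 \<le> i \<Longrightarrow> 0 < secant r k (real i)"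
  by (rule secant_pos) simp_all

lemma layer_map_own_layer:
  assumes "1 \<le> k"
  shows "layer_map r k x (real k) = (\<lambda>i. x i - real k * e1 i)"
proof -
  have "secant r k (real k) \<noteq> 0"
    using secant_pos_at_nat[OF assms assms] by linarith
  then show ?thesis
    unfolding layer_map_def by simp
qed

lemma layer_map_other_layer:
  assumes i: "1 \<le> i" and k: "1 \<le> k" and ik: "i \<noteq> k" and c: "c \<in> C i"
  shows "layer_map r k (\<lambda>j. c j + real i * e1 j) (real i) \<in> C k"
proof -
  define scale where "scale = secant r k (real k) / secant r k (real i)"
  have s_pos: "0 < secant r k (real k)" and L_pos: "0 < secant r k (real i)"
    using secant_pos_at_nat k i by blast+
  have c_outer: "c \<in> Rn n" "norm2 n c \<le> r (real i)"
    using C_outer c i by auto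
  have "norm2 n (\<lambda>j. scale * c j) = scale * norm2 n c"
    using s_pos L_pos norm2_scale[of n scale c] unfolding scale_def by simp
  also have "\<dots> \<le> scale * secant r k (real i)"
    using c_outer r_le_secant[OF k ik] s_pos L_pos unfolding scale_def
    by (intro mult_left_mono) auto
  also have "\<dots> = secant r k (real k)"
    using L_pos unfolding scale_def by simp
  finally have "norm2 n (\<lambda>j. scale * c j) \<le> (r (real k - 1) + r (real k + 1)) / 2"
    unfolding secant_center .
  moreover have "(\<lambda>j. scale * c j) \<in> Rn n"
    using c_outer unfolding Rn_def by auto
  moreover have "layer_map r k (\<lambda>j. c j + real i * e1 j) (real i) = (\<lambda>j. scale * c j)"
    unfolding layer_map_def scale_def by simp
  ultimately show ?thesis
    using C_inner k by auto
qed

lemma continuous_on_layer_map: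
  assumes k: "1 \<le> k"
  shows "continuous_on {p. 1 \<le> snd (snd p) 0}
           (\<lambda>p :: (nat \<Rightarrow> real) \<times> (nat \<Rightarrow> real) \<times> (nat \<Rightarrow> real).
              layer_map r k (fst p) (snd (snd p) 0))"
  unfolding layer_map_def
proof (intro continuous_on_coordinatewise_then_product)
  fix i
  have fst_coord:
    "continuous_on S (\<lambda>p :: (nat \<Rightarrow> real) \<times> (nat \<Rightarrow> real) \<times> (nat \<Rightarrow> real). fst p i)" for S
    by (rule continuous_on_compose2[OF continuous_on_product_coordinates
          continuous_on_fst[OF continuous_on_id]]) auto
  have z_coord:
    "continuous_on S (\<lambda>p :: (nat \<Rightarrow> real) \<times> (nat \<Rightarrow> real) \<times> (nat \<Rightarrow> real). snd (snd p) 0)" for S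
    by (rule continuous_on_compose2[OF continuous_on_product_coordinates
          continuous_on_snd[OF continuous_on_snd[OF continuous_on_id]]]) auto
  have "\<forall>p\<in>{p. 1 \<le> snd (snd p) 0}. secant r k (snd (snd p) 0) \<noteq> 0"
    using secant_pos[OF k] by force
  then show "continuous_on {p. 1 \<le> snd (snd p) 0}
      (\<lambda>p :: (nat \<Rightarrow> real) \<times> (nat \<Rightarrow> real) \<times> (nat \<Rightarrow> real).
        secant r k (real k) / secant r k (snd (snd p) 0) * (fst p i - snd (snd p) 0 * e1 i))"
    unfolding secant_def by (intro continuous_intros fst_coord z_coord) auto
qed

lemma closed_micp_lift: "closed (micp_lift r n C)"
proof -
  define D where "D = Rn n \<times> Rn 0 \<times> (Rn 1 \<inter> {z. 1 \<le> z 0})"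
  have "closed {z :: nat \<Rightarrow> real. 1 \<le> z 0}"
    by (intro closed_Collect_le continuous_on_product_coordinates continuous_on_const)
  then have D_closed: "closed D"
    unfolding D_def by (simp add: closed_Times closed_Rn closed_Int)
  have "D \<subseteq> {p. 1 \<le> snd (snd p) 0}"
    unfolding D_def by auto
  then have "continuous_on D (\<lambda>p. layer_map r k (fst p) (snd (snd p) 0))" if "1 \<le> k" for k
    using continuous_on_layer_map[OF that] continuous_on_subset by blast
  then have closed_constraint:
    "closed (D \<inter> (\<lambda>p. layer_map r k (fst p) (snd (snd p) 0)) -` C k)" if "1 \<le> k" for k
    using that D_closed C_basic by (intro continuous_closed_preimage) auto
  have lift_eq: "micp_lift r n C
      = D \<inter> (\<Inter>k\<in>{1..}. D \<inter> (\<lambda>p. layer_map r k (fst p) (snd (snd p) 0)) -` C k)"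
    unfolding micp_lift_def D_def by auto
  show ?thesis
    unfolding lift_eq
  proof (rule closed_Int[OF D_closed], rule closed_INT, rule ballI)
    fix k :: nat assume "k \<in> {1..}"
    then show "closed (D \<inter> (\<lambda>p. layer_map r k (fst p) (snd (snd p) 0)) -` C k)"
      using closed_constraint by simp
  qed
qed

lemma vconvex3_micp_lift: "vconvex3 (micp_lift r n C)"
  unfolding vconvex3_def
proof (intro allI impI, elim conjE)
  fix x y z x' y' z' and u :: real
  assume p: "(x, y, z) \<in> micp_lift r n C" and p': "(x', y', z') \<in> micp_lift r n C"
    and u: "0 \<le> u" "u \<le> 1"
  have z: "1 \<le> z 0" and z': "1 \<le> z' 0"
    using p p' unfolding micp_lift_def by auto
  have "(1 - u) * 1 + u * 1 \<le> (1 - u) * z 0 + u * z' 0"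
    using u z z' by (intro add_mono mult_left_mono) auto
  then have z_comb: "1 \<le> vcomb u z z' 0"
    unfolding vcomb_def by simp
  have "layer_map r k (vcomb u x x') (vcomb u z z' 0) \<in> C k" if k: "1 \<le> k" for k
  proof -
    have secant_comb:
      "secant r k (vcomb u z z' 0) = (1 - u) * secant r k (z 0) + u * secant r k (z' 0)"
      unfolding secant_def vcomb_def by (simp add: field_simps)
    define \<mu> where
      "\<mu> = u * secant r k (z' 0) / ((1 - u) * secant r k (z 0) + u * secant r k (z' 0))"
    note perspective =
      vcomb_perspective[OF secant_pos[OF k z] secant_pos[OF k z'] u, folded \<mu>_def]
    have "layer_map r k (vcomb u x x') (vcomb u z z' 0)
        = (\<lambda>i. secant r k (real k) / ((1 - u) * secant r k (z 0) + u * secant r k (z' 0))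
             * ((1 - u) * (x i - z 0 * e1 i) + u * (x' i - z' 0 * e1 i)))"
      unfolding layer_map_def secant_comb by (simp add: vcomb_def algebra_simps)
    also have "\<dots> = vcomb \<mu> (layer_map r k x (z 0)) (layer_map r k x' (z' 0))"
      unfolding layer_map_def by (rule perspective(3))
    finally have eq: "layer_map r k (vcomb u x x') (vcomb u z z' 0)
        = vcomb \<mu> (layer_map r k x (z 0)) (layer_map r k x' (z' 0))" .
    have "layer_map r k x (z 0) \<in> C k" "layer_map r k x' (z' 0) \<in> C k"
      using p p' k unfolding micp_lift_def by auto
    then show ?thesis
      using C_basic k perspective(1,2) unfolding eq vconvex_def by auto
  qed
  then show "(vcomb u x x', vcomb u y y', vcomb u z z') \<in> micp_lift r n C"
    using p p' z_comb Rn_vcomb unfolding micp_lift_def by auto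
qed

lemma e1_Rn: "e1 \<in> Rn n"
  using n_pos unfolding Rn_def e1_def by auto

lemma shifted_subset_Rn:
  assumes "1 \<le> i"
  shows "vshift (C i) (vscale (real i) e1) \<subseteq> Rn n"
proof
  fix x assume "x \<in> vshift (C i) (vscale (real i) e1)"
  then obtain c where "c \<in> C i" "x = (\<lambda>j. c j + real i * e1 j)"
    unfolding mem_vshift_vscale by auto
  then show "x \<in> Rn n"
    using C_basic assms e1_Rn unfolding Rn_def by auto
qed

lemma micp_lift_integer_fibre:
  assumes x: "x \<in> Rn n"
  shows "x \<in> (\<Union>i\<in>{1..}. vshift (C i) (vscale (real i) e1))
    \<longleftrightarrow> (\<exists>y\<in>Rn 0. \<exists>z\<in>Rn 1. Zvec z \<and> (x, y, z) \<in> micp_lift r n C)"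
proof
  assume "x \<in> (\<Union>i\<in>{1..}. vshift (C i) (vscale (real i) e1))"
  then obtain i c where i: "1 \<le> i" and c: "c \<in> C i" and xc: "x = (\<lambda>j. c j + real i * e1 j)"
    by (auto simp: mem_vshift_vscale)
  define z where "z = (\<lambda>j::nat. if j = 0 then real i else 0)"
  have "layer_map r k x (real i) \<in> C k" if k: "1 \<le> k" for k
  proof (cases "k = i")
    case True
    then show ?thesis
      using layer_map_own_layer[OF i] c unfolding xc by simp
  next
    case False
    then show ?thesis
      using layer_map_other_layer[OF i k _ c] unfolding xc by simp
  qed
  then have "(x, \<lambda>_. 0, z) \<in> micp_lift r n C"
    using x i unfolding micp_lift_def z_def Rn_def by auto
  moreover have "z \<in> Rn 1" "Zvec z"
    unfolding z_def Rn_def Zvec_def by auto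
  moreover have "(\<lambda>_. 0) \<in> Rn 0"
    unfolding Rn_def by simp
  ultimately show "\<exists>y\<in>Rn 0. \<exists>z\<in>Rn 1. Zvec z \<and> (x, y, z) \<in> micp_lift r n C"
    by blast
next
  assume "\<exists>y\<in>Rn 0. \<exists>z\<in>Rn 1. Zvec z \<and> (x, y, z) \<in> micp_lift r n C"
  then obtain y z where "Zvec z" and xyz: "(x, y, z) \<in> micp_lift r n C"
    by auto
  moreover have z_ge: "1 \<le> z 0"
    using xyz unfolding micp_lift_def by auto
  ultimately have "z 0 \<in> \<nat>"
    unfolding Zvec_def Nats_altdef2 by auto
  then obtain k :: nat where zk: "z 0 = real k"
    by (auto elim: Nats_cases)
  have k: "1 \<le> k"
    using z_ge zk by simp
  have "layer_map r k x (real k) \<in> C k"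
    using xyz k zk unfolding micp_lift_def by auto
  then have "(\<lambda>j. x j - real k * e1 j) \<in> C k"
    using layer_map_own_layer[OF k] by simp
  then have "x \<in> vshift (C k) (vscale (real k) e1)"
    unfolding mem_vshift_vscale by force
  then show "x \<in> (\<Union>i\<in>{1..}. vshift (C i) (vscale (real i) e1))"
    using k by auto
qed

lemma proj_z_micp_lift: "proj_z (micp_lift r n C) = {z \<in> Rn 1. 1 \<le> z 0}"
proof
  show "proj_z (micp_lift r n C) \<subseteq> {z \<in> Rn 1. 1 \<le> z 0}"
    unfolding proj_z_def micp_lift_def by auto
next
  show "{z \<in> Rn 1. 1 \<le> z 0} \<subseteq> proj_z (micp_lift r n C)"
  proof
    fix z assume z: "z \<in> {z \<in> Rn 1. 1 \<le> z 0}"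
    have "layer_map r k (\<lambda>i. z 0 * e1 i) (z 0) = (\<lambda>_. 0)" for k
      unfolding layer_map_def by simp
    moreover have "(\<lambda>i. z 0 * e1 i) \<in> Rn n" "(\<lambda>_. 0) \<in> Rn 0"
      using e1_Rn unfolding Rn_def by auto
    ultimately have "((\<lambda>i. z 0 * e1 i), (\<lambda>_. 0), z) \<in> micp_lift r n C"
      using z C_basic unfolding micp_lift_def by auto
    then show "z \<in> proj_z (micp_lift r n C)"
      unfolding proj_z_def by auto
  qed
qed

lemma shifted_first_coordinate:
  assumes "1 \<le> i" "x \<in> vshift (C i) (vscale (real i) e1)"
  shows "\<bar>x 0 - real i\<bar> < 1/2"
proof -
  obtain c where c: "c \<in> C i" and xc: "x = (\<lambda>j. c j + real i * e1 j)"
    using assms(2) unfolding mem_vshift_vscale by auto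
  have "\<bar>c 0\<bar> \<le> norm2 n c"
    using abs_le_norm2 n_pos by simp
  also have "\<dots> \<le> r (real i)"
    using C_outer c assms(1) by auto
  also have "\<dots> < 1/2"
    using r_range by simp
  finally show ?thesis
    unfolding xc by (simp add: e1_def)
qed

lemma shifted_disjoint:
  assumes "1 \<le> i" "1 \<le> j" "i \<noteq> j"
  shows "vshift (C i) (vscale (real i) e1) \<inter> vshift (C j) (vscale (real j) e1) = {}"
proof -
  have False
    if "x \<in> vshift (C i) (vscale (real i) e1)" "x \<in> vshift (C j) (vscale (real j) e1)" for x
  proof -
    have "\<bar>real i - real j\<bar> < 1"
      using shifted_first_coordinate[OF assms(1) that(1)]
        shifted_first_coordinate[OF assms(2) that(2)] by linarith
    then show False
      using assms(3) by linarith
  qed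
  then show ?thesis by blast
qed

end

theorem proposition2:
  fixes r :: "real \<Rightarrow> real" and n :: nat and C :: "nat \<Rightarrow> (nat \<Rightarrow> real) set"
  assumes "n \<ge> 1"
    and "concave_on {0..} r" and "strict_mono_on {0..} r"
    and "\<forall>z\<ge>0. 0 \<le> r z \<and> r z < 1/2"
    and "\<forall>i\<ge>1. C i \<subseteq> Rn n \<and> closed (C i) \<and> vconvex (C i) \<and> (\<lambda>_. 0) \<in> C i"
    and "\<forall>i\<ge>1. {x \<in> Rn n. norm2 n x \<le> (r (real i - 1) + r (real i + 1)) / 2} \<subseteq> C i"
    and "\<forall>i\<ge>1. C i \<subseteq> {x \<in> Rn n. norm2 n x \<le> r (real i)}"
  shows "rational_MICP_representable n (\<Union>i\<in>{1..}. vshift (C i) (vscale (real i) e1))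
         \<and> (\<forall>i\<ge>1. \<forall>j\<ge>1. i \<noteq> j \<longrightarrow>
              vshift (C i) (vscale (real i) e1) \<inter> vshift (C j) (vscale (real j) e1) = {})"
proof -
  interpret stacked_convex_sets r n C
    using assms by unfold_locales
  let ?S = "\<Union>i\<in>{1..}. vshift (C i) (vscale (real i) e1)"
  have "micp_lift r n C \<subseteq> Rn n \<times> Rn 0 \<times> Rn 1"
    unfolding micp_lift_def by auto
  then have "MICP_rep_by n ?S 0 1 (micp_lift r n C)"
    unfolding MICP_rep_by_def
    by (intro conjI ballI closed_micp_lift vconvex3_micp_lift micp_lift_integer_fibre)
  moreover have "rationally_unbounded 1 (proj_z (micp_lift r n C))"
    unfolding proj_z_micp_lift by (rule rationally_unbounded_halfline)
  moreover have "?S \<subseteq> Rn n"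
    using shifted_subset_Rn by blast
  ultimately show ?thesis
    unfolding rational_MICP_representable_def using shifted_disjoint by blast
qed

end
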